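(* Let $T>0$, $\alpha\in(\tfrac74,2)$, and let $v^N:[0,T]\to L^2(0,1)$, $N\ge1$, be continuous functions with $\sup_N\sup_{t\in[0,T]}|v^N(t)|_{L^2}<\infty$. Define $y^N(t)=\int_0^te^{-A^{\alpha/2}(t-s)}P_N\partial_x\big((v^N(s))^2\big)\,ds$. Then $\sup_N\sup_{t\in[0,T]}|y^N(t)|_{L^4}<\infty$.
   Context: Let $e_k(x)=\sqrt2\sin(k\pi x)$, $k\ge1$, be the $L^2(0,1)$-orthonormal eigenfunctions of $A=-\partial_x^2$ with Dirichlet boundary conditions on $(0,1)$, with eigenvalues $\lambda_k=(k\pi)^2$. For $g\in L^1(0,1)$, $\partial_xg$ is the distribution with coefficients $\langle\partial_xg,e_k\rangle:=-\int_0^1g(x)e_k'(x)dx$; $e^{-A^{\alpha/2}t}P_N\partial_xg=\sum_{k=1}^Ne^{-\lambda_k^{\alpha/2}t}\langle\partial_xg,e_k\rangle e_k$ (and $e^{-A^{\alpha/2}t}w=\sum_ke^{-\lambda_k^{\alpha/2}t}\langle w,e_k\rangle e_k$ in general). *)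

theory Defs
  imports "HOL-Analysis.Analysis"
begin

text \<open>Functions on (0,1) are represented as real-valued functions on the reals; only
  their values on [0,1] matter (the endpoints are a null set).\<close>

definition Lp_norm :: "real \<Rightarrow> (real \<Rightarrow> real) \<Rightarrow> real" where
  "Lp_norm p f = (LINT x:{0..1}|lborel. \<bar>f x\<bar> powr p) powr (1 / p)"

definition in_L2 :: "(real \<Rightarrow> real) \<Rightarrow> bool" where
  "in_L2 f \<longleftrightarrow> set_borel_measurable lborel {0..1} f
      \<and> set_integrable lborel {0..1} (\<lambda>x. (f x)\<^sup>2)"

definition efun :: "nat \<Rightarrow> real \<Rightarrow> real" where
  "efun k x = sqrt 2 * sin (real k * pi * x)"

definition efun' :: "nat \<Rightarrow> real \<Rightarrow> real" where
  "efun' k x = sqrt 2 * real k * pi * cos (real k * pi * x)"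

definition eigval :: "nat \<Rightarrow> real" where
  "eigval k = (real k * pi)\<^sup>2"

text \<open>Coefficient <d_x g, e_k> := - int_0^1 g(x) e_k'(x) dx.\<close>
definition dx_coeff :: "(real \<Rightarrow> real) \<Rightarrow> nat \<Rightarrow> real" where
  "dx_coeff g k = - (LINT x:{0..1}|lborel. g x * efun' k x)"

definition yN :: "real \<Rightarrow> nat \<Rightarrow> (real \<Rightarrow> real \<Rightarrow> real) \<Rightarrow> real \<Rightarrow> real \<Rightarrow> real" where
  "yN \<alpha> N w t x = (LBINT s=0..t.
      (\<Sum>k\<in>{1..N}. exp (- (eigval k powr (\<alpha> / 2)) * (t - s))
                    * dx_coeff (\<lambda>z. (w s z)\<^sup>2) k * efun k x))"

end

theory Submission
  imports Defs "HOL-Library.Discrete_Functions"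
begin

(* Expanding in the eigenbasis, y^N(t) = sum_{k<=N} c_k(t) e_k with
   c_k(t) = int_0^t exp(-(k pi)^alpha (t - s)) <d_x (v^N(s))^2, e_k> ds.
   Since |<d_x g, e_k>| <= sqrt 2 k pi |g|_{L^1} and |(v^N(s))^2|_{L^1} = |v^N(s)|_{L^2}^2 is
   bounded, |c_k(t)| <= B k^(-beta) with beta = alpha - 1 > 3/4, uniformly in N and t.
   On a dyadic block 2^j <= k < 2^(j+1) the crude estimate |f|_4^4 <= |f|_inf^2 |f|_2^2 gives
   |f_j|_4 <= 2^(1/4) B 2^((3/4 - beta) j), and Minkowski's inequality sums these geometrically.
   Continuity of v^N in L^2 makes the coefficients continuous in time, which justifies
   exchanging the time integral with the finite sum. *)

section \<open>Dirichlet eigenfunctions\<close>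

lemma has_integral_cos_int_multiple_pi:
  fixes m :: int
  shows "((\<lambda>x. cos (of_int m * pi * x)) has_integral (if m = 0 then 1 else 0)) {0..1}"
proof (cases "m = 0")
  case False
  have antiderivative: "((\<lambda>x. sin (of_int m * pi * x) / (of_int m * pi)) has_vector_derivative
      cos (of_int m * pi * x)) (at x within {0..1})" for x
    using False by (auto intro!: derivative_eq_intros
        simp flip: has_real_derivative_iff_has_vector_derivative)
  have "sin (of_int m * pi) = 0"
    by (metis sin_zero_iff_int2 Ints_of_int)
  with fundamental_theorem_of_calculus[of 0 1, OF _ antiderivative] False show ?thesis
    by simp
qed (use has_integral_const_real[of "1::real" 0 1] in simp)

lemma efun_mult_efun:
  "efun k x * efun l x = cos (of_int (int k - int l) * pi * x) - cos (of_int (int k + int l) * pi * x)"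
  unfolding efun_def by (simp add: cos_diff cos_add algebra_simps)

lemma efun_orthonormal:
  assumes "k \<ge> 1" "l \<ge> 1"
  shows "((\<lambda>x. efun k x * efun l x) has_integral (if k = l then 1 else 0)) {0..1}"
  using has_integral_diff[OF has_integral_cos_int_multiple_pi has_integral_cos_int_multiple_pi,
      of "int k - int l" "int k + int l"] assms
  by (simp add: efun_mult_efun)

lemma continuous_on_efun [continuous_intros]: "continuous_on S (efun k)"
  unfolding efun_def by (intro continuous_intros)

lemma abs_efun_le: "\<bar>efun k x\<bar> \<le> sqrt 2"
  unfolding efun_def by (simp add: abs_mult)

lemma abs_efun'_le: "\<bar>efun' k x\<bar> \<le> sqrt 2 * k * pi"
  unfolding efun'_def by (simp add: abs_mult mult_left_le)

lemma integral_sum_efun_squared: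
  assumes "finite S" "S \<subseteq> {1..}"
  shows "integral {0..1} (\<lambda>x. (\<Sum>k\<in>S. c k * efun k x)\<^sup>2) = (\<Sum>k\<in>S. (c k)\<^sup>2)"
proof -
  have "integral {0..1} (\<lambda>x. (\<Sum>k\<in>S. c k * efun k x)\<^sup>2)
      = integral {0..1} (\<lambda>x. \<Sum>k\<in>S. \<Sum>l\<in>S. c k * c l * (efun k x * efun l x))"
    by (simp add: power2_eq_square sum_product algebra_simps)
  also have "\<dots> = (\<Sum>k\<in>S. \<Sum>l\<in>S. c k * c l * (if k = l then 1 else 0))"
    using assms efun_orthonormal
    by (subst integral_unique[OF has_integral_sum]) (auto intro!: has_integral_sum has_integral_mult_right)
  also have "\<dots> = (\<Sum>k\<in>S. (c k)\<^sup>2)"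
    using assms(1) by (simp add: power2_eq_square if_distrib cong: if_cong)
  finally show ?thesis .
qed

section \<open>\<open>L\<^sup>4\<close> bounds for finite sine sums\<close>

lemma integral_sum_efun_power4_le:
  fixes c :: "nat \<Rightarrow> real" and M :: real
  assumes "finite S" "S \<subseteq> {1..}" and c: "\<And>k. k \<in> S \<Longrightarrow> \<bar>c k\<bar> \<le> M"
  shows "integral {0..1} (\<lambda>x. (\<Sum>k\<in>S. c k * efun k x) ^ 4) \<le> 2 * card S ^ 3 * M ^ 4"
proof -
  define g where "g x = (\<Sum>k\<in>S. c k * efun k x)" for x
  have "\<bar>g x\<bar> \<le> (\<Sum>k\<in>S. M * sqrt 2)" for x
    unfolding g_def using c
    by (intro order_trans[OF sum_abs] sum_mono)
      (auto simp: abs_mult intro!: mult_mono abs_efun_le order_trans[OF abs_ge_zero])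
  then have sup_norm: "\<bar>g x\<bar> \<le> sqrt 2 * (card S * M)" for x
    by (simp add: algebra_simps)
  have "(g x)\<^sup>2 \<le> 2 * (card S * M)\<^sup>2" for x
    using power_mono[OF sup_norm abs_ge_zero, of x 2] by (simp add: power_mult_distrib)
  then have pointwise: "(g x) ^ 4 \<le> 2 * (card S * M)\<^sup>2 * (g x)\<^sup>2" for x
    using mult_right_mono[OF _ zero_le_power2] by (metis power_add numeral_Bit0)
  have "integral {0..1} (\<lambda>x. (g x) ^ 4) \<le> integral {0..1} (\<lambda>x. 2 * (card S * M)\<^sup>2 * (g x)\<^sup>2)"
    unfolding g_def using pointwise[unfolded g_def]
    by (intro integral_le integrable_continuous_real continuous_intros) auto
  also have "\<dots> = 2 * (card S * M)\<^sup>2 * (\<Sum>k\<in>S. (c k)\<^sup>2)"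
    unfolding g_def using integral_sum_efun_squared[OF assms(1,2)] by simp
  also have "\<dots> \<le> 2 * (card S * M)\<^sup>2 * (\<Sum>k\<in>S. M\<^sup>2)"
    using power_mono[OF c abs_ge_zero, of _ 2] by (intro mult_left_mono sum_mono) auto
  also have "\<dots> = 2 * card S ^ 3 * M ^ 4"
    by (simp add: power2_eq_square power3_eq_cube power4_eq_xxxx)
  finally show ?thesis unfolding g_def .
qed

lemma sum_squared_le_weighted:
  fixes g a :: "'a \<Rightarrow> real"
  assumes "\<And>j. j \<in> J \<Longrightarrow> a j > 0"
  shows "(\<Sum>j\<in>J. g j)\<^sup>2 \<le> (\<Sum>j\<in>J. a j) * (\<Sum>j\<in>J. (g j)\<^sup>2 / a j)"
proof -
  have "sqrt (a j) * (g j / sqrt (a j)) = g j" "(sqrt (a j))\<^sup>2 = a j"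
    "(g j / sqrt (a j))\<^sup>2 = (g j)\<^sup>2 / a j" if "j \<in> J" for j
    using assms[OF that] by (simp_all add: power_divide)
  then show ?thesis
    using Cauchy_Schwarz_ineq_sum[where a = "\<lambda>j. sqrt (a j)" and b = "\<lambda>j. g j / sqrt (a j)" and I = J]
    by (simp cong: sum.cong)
qed

lemma sum_power4_le_weighted:
  fixes g a :: "'a \<Rightarrow> real"
  assumes a: "\<And>j. j \<in> J \<Longrightarrow> a j > 0"
  shows "(\<Sum>j\<in>J. g j) ^ 4 \<le> (\<Sum>j\<in>J. a j) ^ 3 * (\<Sum>j\<in>J. (g j) ^ 4 / (a j) ^ 3)"
proof -
  define A where "A = (\<Sum>j\<in>J. a j)"
  have "(\<Sum>j\<in>J. (g j)\<^sup>2 / a j)\<^sup>2 \<le> A * (\<Sum>j\<in>J. ((g j)\<^sup>2 / a j)\<^sup>2 / a j)"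
    unfolding A_def using a by (rule sum_squared_le_weighted)
  also have "(\<Sum>j\<in>J. ((g j)\<^sup>2 / a j)\<^sup>2 / a j) = (\<Sum>j\<in>J. (g j) ^ 4 / (a j) ^ 3)"
    by (simp add: power_divide eval_nat_numeral mult_ac)
  finally have inner: "(\<Sum>j\<in>J. (g j)\<^sup>2 / a j)\<^sup>2 \<le> A * (\<Sum>j\<in>J. (g j) ^ 4 / (a j) ^ 3)" .
  have "(\<Sum>j\<in>J. g j) ^ 4 = ((\<Sum>j\<in>J. g j)\<^sup>2)\<^sup>2"
    by simp
  also have "\<dots> \<le> (A * (\<Sum>j\<in>J. (g j)\<^sup>2 / a j))\<^sup>2"
    unfolding A_def using a by (intro power_mono sum_squared_le_weighted) auto
  also have "\<dots> = A\<^sup>2 * (\<Sum>j\<in>J. (g j)\<^sup>2 / a j)\<^sup>2"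
    by (simp add: power_mult_distrib)
  also have "\<dots> \<le> A\<^sup>2 * (A * (\<Sum>j\<in>J. (g j) ^ 4 / (a j) ^ 3))"
    using inner by (simp add: mult_left_mono)
  finally show ?thesis
    unfolding A_def by (simp add: power2_eq_square power3_eq_cube mult.assoc)
qed

(* Minkowski's inequality in L^4. *)
lemma integral_sum_power4_le:
  fixes g :: "'a \<Rightarrow> real \<Rightarrow> real"
  assumes "finite J" and b: "\<And>j. j \<in> J \<Longrightarrow> b j > 0"
    and int: "\<And>j. j \<in> J \<Longrightarrow> (\<lambda>x. (g j x) ^ 4) integrable_on S"
    and int_sum: "(\<lambda>x. (\<Sum>j\<in>J. g j x) ^ 4) integrable_on S"
    and bound: "\<And>j. j \<in> J \<Longrightarrow> integral S (\<lambda>x. (g j x) ^ 4) \<le> b j ^ 4"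
  shows "integral S (\<lambda>x. (\<Sum>j\<in>J. g j x) ^ 4) \<le> (\<Sum>j\<in>J. b j) ^ 4"
proof -
  have int_weighted: "(\<lambda>x. (g j x) ^ 4 / b j ^ 3) integrable_on S" if "j \<in> J" for j
    using int[OF that] by (rule integrable_on_divide)
  have "integral S (\<lambda>x. (\<Sum>j\<in>J. g j x) ^ 4)
      \<le> integral S (\<lambda>x. (\<Sum>j\<in>J. b j) ^ 3 * (\<Sum>j\<in>J. (g j x) ^ 4 / b j ^ 3))"
    using assms(1) b int_weighted
    by (intro integral_le int_sum integrable_on_mult_right integrable_sum sum_power4_le_weighted) auto
  also have "\<dots> = (\<Sum>j\<in>J. b j) ^ 3 * (\<Sum>j\<in>J. integral S (\<lambda>x. (g j x) ^ 4) / b j ^ 3)"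
    using assms(1) int_weighted by (simp add: integral_sum integrable_sum)
  also have "\<dots> \<le> (\<Sum>j\<in>J. b j) ^ 3 * (\<Sum>j\<in>J. b j ^ 4 / b j ^ 3)"
    using b bound by (intro mult_left_mono sum_mono divide_right_mono zero_le_power sum_nonneg)
      (auto intro: less_imp_le)
  also have "\<dots> = (\<Sum>j\<in>J. b j) ^ 3 * (\<Sum>j\<in>J. b j)"
  proof (intro arg_cong2[where f = "(*)"] sum.cong refl)
    fix j assume "j \<in> J"
    with b[OF this] power_diff[of "b j" 3 4] show "b j ^ 4 / b j ^ 3 = b j" by simp
  qed
  finally show ?thesis
    by (simp add: power4_eq_xxxx power3_eq_cube mult.assoc)
qed

lemma sum_over_dyadic_blocks:
  "(\<Sum>k\<in>{1..N}. f k) = (\<Sum>j<N. \<Sum>k\<in>{k \<in> {1..N}. floor_log k = j}. f k)"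
proof -
  have "floor_log k < N" if "k \<in> {1..N}" for k
  proof -
    have "floor_log k < 2 ^ floor_log k"
      by (rule less_exp)
    also have "\<dots> \<le> k"
      using that by (intro floor_log_exp2_le) auto
    finally show ?thesis
      using that by simp
  qed
  then show ?thesis
    by (intro sum.group[symmetric]) auto
qed

lemma card_dyadic_block_le: "card {k \<in> {1..N}. floor_log k = j} \<le> 2 ^ j"
proof -
  have "{k \<in> {1..N}. floor_log k = j} \<subseteq> {2 ^ j..<2 * 2 ^ j}"
    using floor_log_exp2_le floor_log_exp2_gt by auto
  from card_mono[OF _ this] show ?thesis
    by simp
qed

lemma integral_sum_efun_power4_le_decay:
  fixes c :: "nat \<Rightarrow> real"
  assumes \<beta>: "3/4 < \<beta>" and B: "0 < B"
    and c: "\<And>k. k \<in> {1..N} \<Longrightarrow> \<bar>c k\<bar> \<le> B * k powr - \<beta>"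
  shows "integral {0..1} (\<lambda>x. (\<Sum>k\<in>{1..N}. c k * efun k x) ^ 4)
    \<le> 2 * (B / (1 - 2 powr (3/4 - \<beta>))) ^ 4"
proof -
  define \<sigma> :: real where "\<sigma> = 2 powr - \<beta>"
  define \<rho> :: real where "\<rho> = 2 powr (3/4 - \<beta>)"
  define block where "block j = {k \<in> {1..N}. floor_log k = j}" for j
  have \<rho>: "0 < \<rho>" "\<rho> < 1"
    unfolding \<rho>_def using \<beta> by (auto intro: powr_less_one)
  have "\<rho> ^ 4 = 2 powr ((3/4 - \<beta>) * 4)"
    unfolding \<rho>_def by (simp add: powr_powr flip: powr_realpow)
  also have "\<dots> = 2 powr 3 * (2 powr - \<beta>) powr 4"
    unfolding powr_powr powr_add[symmetric] by (simp add: algebra_simps)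
  also have "\<dots> = 8 * \<sigma> ^ 4"
    unfolding \<sigma>_def by (simp add: powr_numeral)
  finally have \<rho>_pow4: "\<rho> ^ 4 = 8 * \<sigma> ^ 4" .
  have block_coeff: "\<bar>c k\<bar> \<le> B * \<sigma> ^ j" if "k \<in> block j" for k j
  proof -
    have k: "k \<in> {1..N}" "2 ^ j \<le> k"
      using that floor_log_exp2_le[of k] by (auto simp: block_def)
    then have "(2::real) ^ j \<le> k"
      by (metis of_nat_le_iff of_nat_numeral of_nat_power)
    then have "real k powr - \<beta> \<le> (2 ^ j) powr - \<beta>"
      using \<beta> by (intro powr_mono2') auto
    also have "\<dots> = \<sigma> ^ j"
      unfolding \<sigma>_def by (simp add: powr_powr mult.commute flip: powr_realpow)
    finally show ?thesis
      using c[OF k(1)] B by (meson mult_left_mono order_trans less_imp_le)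
  qed
  have block_bound:
    "integral {0..1} (\<lambda>x. (\<Sum>k\<in>block j. c k * efun k x) ^ 4) \<le> (root 4 2 * B * \<rho> ^ j) ^ 4" for j
  proof -
    have "integral {0..1} (\<lambda>x. (\<Sum>k\<in>block j. c k * efun k x) ^ 4)
        \<le> 2 * card (block j) ^ 3 * (B * \<sigma> ^ j) ^ 4"
      by (rule integral_sum_efun_power4_le) (auto simp: block_def intro: block_coeff)
    also have "\<dots> \<le> 2 * (2 ^ j) ^ 3 * (B * \<sigma> ^ j) ^ 4"
      using card_dyadic_block_le[of N j] unfolding block_def
      by (intro mult_right_mono mult_left_mono power_mono)
        (auto simp: numeral_power_le_of_nat_cancel_iff)
    also have "\<dots> = 2 * B ^ 4 * (8 * \<sigma> ^ 4) ^ j"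
    proof -
      have "((2::real) ^ j) ^ 3 = 8 ^ j"
        by (induction j) (simp_all add: power_mult_distrib)
      moreover have "(\<sigma> ^ j) ^ 4 = (\<sigma> ^ 4) ^ j"
        by (metis power_mult mult.commute)
      ultimately show ?thesis
        by (simp add: power_mult_distrib)
    qed
    also have "\<dots> = (root 4 2 * B * \<rho> ^ j) ^ 4"
      using power_mult[of \<rho> j 4] power_mult[of \<rho> 4 j]
      by (simp add: power_mult_distrib \<rho>_pow4 mult.commute)
    finally show ?thesis .
  qed
  have "integral {0..1} (\<lambda>x. (\<Sum>k\<in>{1..N}. c k * efun k x) ^ 4)
      = integral {0..1} (\<lambda>x. (\<Sum>j<N. \<Sum>k\<in>block j. c k * efun k x) ^ 4)"
    unfolding block_def sum_over_dyadic_blocks ..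
  also have "\<dots> \<le> (\<Sum>j<N. root 4 2 * B * \<rho> ^ j) ^ 4"
    using B \<rho> block_bound
    by (intro integral_sum_power4_le integrable_continuous_real continuous_intros) auto
  also have "\<dots> \<le> (root 4 2 * B * (1 / (1 - \<rho>))) ^ 4"
    unfolding sum_distrib_left[symmetric] using B \<rho> geometric_sum_less[OF \<rho>, of "{..<N}"]
    by (intro power_mono mult_left_mono mult_nonneg_nonneg sum_nonneg) auto
  also have "\<dots> = 2 * (B / (1 - \<rho>)) ^ 4"
    by (simp add: power_mult_distrib power_divide)
  finally show ?thesis
    unfolding \<rho>_def .
qed

section \<open>Square-integrable functions\<close>

lemma integrable_mult_of_squares:
  fixes f g :: "'a \<Rightarrow> real"
  assumes [measurable]: "f \<in> borel_measurable M" "g \<in> borel_measurable M"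
    and "integrable M (\<lambda>x. (f x)\<^sup>2)" "integrable M (\<lambda>x. (g x)\<^sup>2)"
  shows "integrable M (\<lambda>x. f x * g x)"
proof (rule Bochner_Integration.integrable_bound)
  show "integrable M (\<lambda>x. (f x)\<^sup>2 + (g x)\<^sup>2)"
    using assms(3,4) by simp
  show "AE x in M. norm (f x * g x) \<le> norm ((f x)\<^sup>2 + (g x)\<^sup>2)"
  proof (rule AE_I2)
    fix x
    have "2 * (\<bar>f x\<bar> * \<bar>g x\<bar>) \<le> (f x)\<^sup>2 + (g x)\<^sup>2"
      using sum_squares_bound[of "\<bar>f x\<bar>" "\<bar>g x\<bar>"] by (simp add: mult.assoc)
    then show "norm (f x * g x) \<le> norm ((f x)\<^sup>2 + (g x)\<^sup>2)"
      using abs_ge_self[of "(f x)\<^sup>2 + (g x)\<^sup>2"] mult_nonneg_nonneg[OF abs_ge_zero abs_ge_zero, of "f x" "g x"]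
      unfolding real_norm_def abs_mult by linarith
  qed
qed measurable

lemma integral_abs_mult_le_sqrt:
  fixes f g :: "'a \<Rightarrow> real"
  assumes [measurable]: "f \<in> borel_measurable M" "g \<in> borel_measurable M"
    and f2: "integrable M (\<lambda>x. (f x)\<^sup>2)" and g2: "integrable M (\<lambda>x. (g x)\<^sup>2)"
  shows "(\<integral>x. \<bar>f x * g x\<bar> \<partial>M) \<le> sqrt (\<integral>x. (f x)\<^sup>2 \<partial>M) * sqrt (\<integral>x. (g x)\<^sup>2 \<partial>M)"
proof -
  have nn_integral_square: "(\<integral>\<^sup>+x. ennreal \<bar>h x\<bar> ^ 2 \<partial>M) = ennreal (\<integral>x. (h x)\<^sup>2 \<partial>M)"
    if "integrable M (\<lambda>x. (h x)\<^sup>2)" for h :: "'a \<Rightarrow> real"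
    using nn_integral_eq_integral[OF that] by (simp add: ennreal_power)
  have "ennreal ((\<integral>x. \<bar>f x * g x\<bar> \<partial>M)\<^sup>2) = (\<integral>\<^sup>+x. ennreal \<bar>f x\<bar> * ennreal \<bar>g x\<bar> \<partial>M)\<^sup>2"
    using nn_integral_eq_integral[OF integrable_abs[OF integrable_mult_of_squares[OF assms]]]
    by (simp add: abs_mult ennreal_mult ennreal_power)
  also have "\<dots> \<le> (\<integral>\<^sup>+x. ennreal \<bar>f x\<bar> ^ 2 \<partial>M) * (\<integral>\<^sup>+x. ennreal \<bar>g x\<bar> ^ 2 \<partial>M)"
    by (rule Cauchy_Schwarz_nn_integral) measurable
  also have "\<dots> = ennreal ((\<integral>x. (f x)\<^sup>2 \<partial>M) * (\<integral>x. (g x)\<^sup>2 \<partial>M))"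
    by (simp add: nn_integral_square f2 g2 ennreal_mult)
  finally have "(\<integral>x. \<bar>f x * g x\<bar> \<partial>M)\<^sup>2 \<le> (\<integral>x. (f x)\<^sup>2 \<partial>M) * (\<integral>x. (g x)\<^sup>2 \<partial>M)"
    by (simp add: ennreal_le_iff)
  then show ?thesis
    by (metis real_le_rsqrt real_sqrt_mult)
qed

lemma integrable_square_diff:
  fixes f g :: "'a \<Rightarrow> real"
  assumes [measurable]: "f \<in> borel_measurable M" "g \<in> borel_measurable M"
    and "integrable M (\<lambda>x. (f x)\<^sup>2)" "integrable M (\<lambda>x. (g x)\<^sup>2)"
  shows "integrable M (\<lambda>x. (f x - g x)\<^sup>2)"
  using integrable_mult_of_squares[OF assms] assms(3,4)
  by (simp add: power2_diff mult.assoc)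

lemma integral_abs_diff_squares_le:
  fixes f g :: "'a \<Rightarrow> real"
  assumes [measurable]: "f \<in> borel_measurable M" "g \<in> borel_measurable M"
    and f2: "integrable M (\<lambda>x. (f x)\<^sup>2)" and g2: "integrable M (\<lambda>x. (g x)\<^sup>2)"
  defines "D \<equiv> sqrt (\<integral>x. (f x - g x)\<^sup>2 \<partial>M)"
  shows "(\<integral>x. \<bar>(f x)\<^sup>2 - (g x)\<^sup>2\<bar> \<partial>M) \<le> D\<^sup>2 + 2 * sqrt (\<integral>x. (g x)\<^sup>2 \<partial>M) * D"
proof -
  have diff2: "integrable M (\<lambda>x. (f x - g x)\<^sup>2)"
    using assms(1-4) by (rule integrable_square_diff)
  have mixed: "integrable M (\<lambda>x. \<bar>g x * (f x - g x)\<bar>)"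
    using g2 diff2 by (intro integrable_abs integrable_mult_of_squares) auto
  have pointwise: "\<bar>(f x)\<^sup>2 - (g x)\<^sup>2\<bar> \<le> (f x - g x)\<^sup>2 + 2 * \<bar>g x * (f x - g x)\<bar>" for x
  proof -
    have "(f x)\<^sup>2 - (g x)\<^sup>2 = (f x - g x)\<^sup>2 + 2 * (g x * (f x - g x))"
      by (simp add: power2_eq_square algebra_simps)
    then show ?thesis
      unfolding abs_le_iff
      using abs_ge_self[of "g x * (f x - g x)"] abs_ge_minus_self[of "g x * (f x - g x)"]
        zero_le_power2[of "f x - g x"]
      by linarith
  qed
  have "(\<integral>x. \<bar>(f x)\<^sup>2 - (g x)\<^sup>2\<bar> \<partial>M) \<le> (\<integral>x. (f x - g x)\<^sup>2 + 2 * \<bar>g x * (f x - g x)\<bar> \<partial>M)"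
    using f2 g2 diff2 mixed pointwise by (intro integral_mono) auto
  also have "\<dots> = D\<^sup>2 + 2 * (\<integral>x. \<bar>g x * (f x - g x)\<bar> \<partial>M)"
    using diff2 mixed by (simp add: D_def integral_nonneg_AE)
  also have "\<dots> \<le> D\<^sup>2 + 2 * (sqrt (\<integral>x. (g x)\<^sup>2 \<partial>M) * D)"
    unfolding D_def using g2 diff2 by (intro add_left_mono mult_left_mono integral_abs_mult_le_sqrt) auto
  finally show ?thesis
    by simp
qed

abbreviation lborel_01 :: "real measure" where
  "lborel_01 \<equiv> restrict_space lborel {0..1}"

lemma set_lebesgue_integral_01:
  fixes f :: "real \<Rightarrow> real"
  shows "(LINT x:{0..1}|lborel. f x) = (\<integral>x. f x \<partial>lborel_01)"
  unfolding set_lebesgue_integral_def by (subst integral_restrict_space) auto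

lemma in_L2_iff: "in_L2 f \<longleftrightarrow> f \<in> borel_measurable lborel_01 \<and> integrable lborel_01 (\<lambda>x. (f x)\<^sup>2)"
  unfolding in_L2_def set_borel_measurable_def
  by (simp add: set_integrable_eq borel_measurable_restrict_space_iff)

lemma Lp_norm_2_eq: "Lp_norm 2 f = sqrt (\<integral>x. (f x)\<^sup>2 \<partial>lborel_01)"
  unfolding Lp_norm_def set_lebesgue_integral_01 by (simp add: powr_half_sqrt integral_nonneg_AE)

lemma Lp_norm_4_continuous:
  assumes "continuous_on {0..1} f"
  shows "Lp_norm 4 f = integral {0..1} (\<lambda>x. (f x) ^ 4) powr (1/4)"
proof -
  have "set_integrable lborel {0..1} (\<lambda>x. (f x) ^ 4)"
    unfolding set_integrable_def using assms
    by (intro borel_integrable_compact continuous_intros) auto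
  then have "(LINT x:{0..1}|lborel. (f x) ^ 4) = integral {0..1} (\<lambda>x. (f x) ^ 4)"
    by (rule set_borel_integral_eq_integral(2))
  then show ?thesis
    unfolding Lp_norm_def by (simp add: power_even_abs_numeral)
qed

lemma borel_measurable_efun': "efun' k \<in> borel_measurable lborel_01"
  unfolding efun'_def by (intro measurable_restrict_space1) measurable

lemma integrable_mult_efun':
  assumes "integrable lborel_01 h"
  shows "integrable lborel_01 (\<lambda>x. h x * efun' k x)"
proof (rule Bochner_Integration.integrable_bound)
  show "integrable lborel_01 (\<lambda>x. sqrt 2 * k * pi * h x)"
    using assms by simp
  show "(\<lambda>x. h x * efun' k x) \<in> borel_measurable lborel_01"
    using borel_measurable_integrable[OF assms] borel_measurable_efun' by measurable
  show "AE x in lborel_01. norm (h x * efun' k x) \<le> norm (sqrt 2 * k * pi * h x)"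
    using abs_efun'_le by (intro AE_I2) (simp add: abs_mult mult_left_mono mult.commute)
qed

lemma abs_dx_coeff_le:
  assumes "integrable lborel_01 h"
  shows "\<bar>dx_coeff h k\<bar> \<le> sqrt 2 * k * pi * (\<integral>x. \<bar>h x\<bar> \<partial>lborel_01)"
proof -
  have "\<bar>\<integral>x. h x * efun' k x \<partial>lborel_01\<bar> \<le> (\<integral>x. sqrt 2 * k * pi * \<bar>h x\<bar> \<partial>lborel_01)"
    using assms abs_efun'_le
    by (intro integral_abs_bound_integral integrable_mult_efun')
      (auto simp: abs_mult mult_left_mono mult.commute)
  then show ?thesis
    unfolding dx_coeff_def set_lebesgue_integral_01 by simp
qed

lemma dx_coeff_diff:
  assumes "integrable lborel_01 g" "integrable lborel_01 h"
  shows "dx_coeff g k - dx_coeff h k = dx_coeff (\<lambda>x. g x - h x) k"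
  unfolding dx_coeff_def set_lebesgue_integral_01
  using integrable_mult_efun'[OF assms(1)] integrable_mult_efun'[OF assms(2)]
  by (simp add: left_diff_distrib)

lemma continuous_on_dx_coeff_square:
  fixes w :: "real \<Rightarrow> real \<Rightarrow> real"
  assumes L2: "\<And>t. t \<in> S \<Longrightarrow> in_L2 (w t)"
    and cont: "\<And>t0. t0 \<in> S \<Longrightarrow> ((\<lambda>t. Lp_norm 2 (\<lambda>x. w t x - w t0 x)) \<longlongrightarrow> 0) (at t0 within S)"
  shows "continuous_on S (\<lambda>t. dx_coeff (\<lambda>x. (w t x)\<^sup>2) k)"
  unfolding continuous_on_def
proof (intro ballI)
  fix t0 assume t0: "t0 \<in> S"
  define D where "D t = Lp_norm 2 (\<lambda>x. w t x - w t0 x)" for t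
  define G where "G = sqrt (\<integral>x. (w t0 x)\<^sup>2 \<partial>lborel_01)"
  have bound: "\<bar>dx_coeff (\<lambda>x. (w t x)\<^sup>2) k - dx_coeff (\<lambda>x. (w t0 x)\<^sup>2) k\<bar>
      \<le> sqrt 2 * k * pi * ((D t)\<^sup>2 + 2 * G * D t)" if t: "t \<in> S" for t
  proof -
    note wt = L2[OF t, unfolded in_L2_iff] and wt0 = L2[OF t0, unfolded in_L2_iff]
    have "\<bar>dx_coeff (\<lambda>x. (w t x)\<^sup>2) k - dx_coeff (\<lambda>x. (w t0 x)\<^sup>2) k\<bar>
        = \<bar>dx_coeff (\<lambda>x. (w t x)\<^sup>2 - (w t0 x)\<^sup>2) k\<bar>"
      using wt wt0 by (simp add: dx_coeff_diff)
    also have "\<dots> \<le> sqrt 2 * k * pi * (\<integral>x. \<bar>(w t x)\<^sup>2 - (w t0 x)\<^sup>2\<bar> \<partial>lborel_01)"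
      using wt wt0 by (intro abs_dx_coeff_le) auto
    also have "\<dots> \<le> sqrt 2 * k * pi * ((D t)\<^sup>2 + 2 * G * D t)"
      unfolding D_def G_def Lp_norm_2_eq using wt wt0
      by (intro mult_left_mono integral_abs_diff_squares_le) auto
    finally show ?thesis .
  qed
  have close: "\<forall>\<^sub>F t in at t0 within S. norm (dx_coeff (\<lambda>x. (w t x)\<^sup>2) k - dx_coeff (\<lambda>x. (w t0 x)\<^sup>2) k)
      \<le> sqrt 2 * k * pi * ((D t)\<^sup>2 + 2 * G * D t)"
    unfolding eventually_at_filter by (intro always_eventually) (simp add: bound)
  have "((\<lambda>t. sqrt 2 * k * pi * ((D t)\<^sup>2 + 2 * G * D t)) \<longlongrightarrow> sqrt 2 * k * pi * (0\<^sup>2 + 2 * G * 0))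
      (at t0 within S)"
    using cont[OF t0] unfolding D_def by (intro tendsto_intros)
  then have "((\<lambda>t. dx_coeff (\<lambda>x. (w t x)\<^sup>2) k - dx_coeff (\<lambda>x. (w t0 x)\<^sup>2) k) \<longlongrightarrow> 0) (at t0 within S)"
    by (intro Lim_null_comparison[OF close]) simp
  then show "((\<lambda>t. dx_coeff (\<lambda>x. (w t x)\<^sup>2) k) \<longlongrightarrow> dx_coeff (\<lambda>x. (w t0 x)\<^sup>2) k) (at t0 within S)"
    by (rule LIM_zero_cancel)
qed

section \<open>The Fourier coefficients of \<open>y\<^sup>N\<close>\<close>

definition yN_coeff :: "real \<Rightarrow> (real \<Rightarrow> real \<Rightarrow> real) \<Rightarrow> real \<Rightarrow> nat \<Rightarrow> real" where
  "yN_coeff \<alpha> w t k = integral {0..t}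
     (\<lambda>s. exp (- (eigval k powr (\<alpha> / 2)) * (t - s)) * dx_coeff (\<lambda>z. (w s z)\<^sup>2) k)"

lemma yN_eq_sum_yN_coeff:
  assumes "0 \<le> t" and cont: "\<And>k. continuous_on {0..t} (\<lambda>s. dx_coeff (\<lambda>z. (w s z)\<^sup>2) k)"
  shows "yN \<alpha> N w t = (\<lambda>x. \<Sum>k\<in>{1..N}. yN_coeff \<alpha> w t k * efun k x)"
proof
  fix x
  let ?f = "\<lambda>k s. exp (- (eigval k powr (\<alpha> / 2)) * (t - s)) * dx_coeff (\<lambda>z. (w s z)\<^sup>2) k * efun k x"
  have "continuous_on {0..t} (\<lambda>s. \<Sum>k\<in>{1..N}. ?f k s)"
    by (intro continuous_intros cont)
  then have "set_integrable lborel {0..t} (\<lambda>s. \<Sum>k\<in>{1..N}. ?f k s)"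
    unfolding set_integrable_def by (intro borel_integrable_compact) auto
  then have "yN \<alpha> N w t x = integral {0..t} (\<lambda>s. \<Sum>k\<in>{1..N}. ?f k s)"
    unfolding yN_def using assms(1) interval_integral_eq_integral[of 0 t] by (simp add: zero_ereal_def)
  also have "\<dots> = (\<Sum>k\<in>{1..N}. integral {0..t} (?f k))"
    by (intro integral_sum) (auto intro!: integrable_continuous_real continuous_intros cont)
  also have "\<dots> = (\<Sum>k\<in>{1..N}. yN_coeff \<alpha> w t k * efun k x)"
    unfolding yN_coeff_def by (intro sum.cong refl integral_mult_left)
  finally show "yN \<alpha> N w t x = (\<Sum>k\<in>{1..N}. yN_coeff \<alpha> w t k * efun k x)" .
qed

lemma abs_integral_exp_decay_le:
  fixes d :: "real \<Rightarrow> real"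
  assumes "0 < \<mu>" "0 \<le> t" and d: "continuous_on {0..t} d" "\<And>s. s \<in> {0..t} \<Longrightarrow> \<bar>d s\<bar> \<le> K"
  shows "\<bar>integral {0..t} (\<lambda>s. exp (- \<mu> * (t - s)) * d s)\<bar> \<le> K / \<mu>"
proof -
  have "0 \<le> K"
    using d(2)[of 0] assms(2) by auto
  have "((\<lambda>s. exp (- \<mu> * (t - s))) has_integral (1 - exp (- \<mu> * t)) / \<mu>) {0..t}"
  proof -
    have "((\<lambda>s. exp (- \<mu> * (t - s)) / \<mu>) has_vector_derivative exp (- \<mu> * (t - s))) (at s within {0..t})" for s
      using assms(1) by (auto intro!: derivative_eq_intros simp flip: has_real_derivative_iff_has_vector_derivative)
    from fundamental_theorem_of_calculus[OF assms(2) this] show ?thesis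
      by (simp add: diff_divide_distrib)
  qed
  then have "integral {0..t} (\<lambda>s. exp (- \<mu> * (t - s)) * K) = (1 - exp (- \<mu> * t)) / \<mu> * K"
    by (simp add: integral_unique)
  moreover have "\<bar>integral {0..t} (\<lambda>s. exp (- \<mu> * (t - s)) * d s)\<bar> \<le> integral {0..t} (\<lambda>s. exp (- \<mu> * (t - s)) * K)"
    unfolding real_norm_def[symmetric] using d
    by (intro integral_norm_bound_integral integrable_continuous_real continuous_intros)
      (auto simp: abs_mult intro!: mult_left_mono)
  moreover have "(1 - exp (- \<mu> * t)) / \<mu> * K \<le> K / \<mu>"
    using assms(1) \<open>0 \<le> K\<close> by (simp add: field_simps)
  ultimately show ?thesis
    by linarith
qed

lemma eigval_powr_half: "eigval k powr (\<alpha> / 2) = (k * pi) powr \<alpha>"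
proof -
  have "eigval k = (k * pi) powr 2"
    unfolding eigval_def by (cases "k = 0") (simp_all add: powr_numeral)
  then show ?thesis
    by (simp only: powr_powr) simp
qed

lemma abs_yN_coeff_le:
  assumes "k \<ge> 1" "0 \<le> t"
    and cont: "continuous_on {0..t} (\<lambda>s. dx_coeff (\<lambda>z. (w s z)\<^sup>2) k)"
    and L2: "\<And>s. s \<in> {0..t} \<Longrightarrow> in_L2 (w s)"
    and bound: "\<And>s. s \<in> {0..t} \<Longrightarrow> Lp_norm 2 (w s) \<le> C"
  shows "\<bar>yN_coeff \<alpha> w t k\<bar> \<le> sqrt 2 * C\<^sup>2 * pi powr (1 - \<alpha>) * k powr (1 - \<alpha>)"
proof -
  have kpi: "0 < k * pi"
    using assms(1) by simp
  have dx_bound: "\<bar>dx_coeff (\<lambda>z. (w s z)\<^sup>2) k\<bar> \<le> sqrt 2 * k * pi * C\<^sup>2" if s: "s \<in> {0..t}" for s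
  proof -
    note ws = L2[OF s, unfolded in_L2_iff]
    have "\<bar>dx_coeff (\<lambda>z. (w s z)\<^sup>2) k\<bar> \<le> sqrt 2 * k * pi * (\<integral>x. (w s x)\<^sup>2 \<partial>lborel_01)"
      using abs_dx_coeff_le[of "\<lambda>z. (w s z)\<^sup>2" k] ws by simp
    also have "(\<integral>x. (w s x)\<^sup>2 \<partial>lborel_01) = (Lp_norm 2 (w s))\<^sup>2"
      unfolding Lp_norm_2_eq by (simp add: integral_nonneg_AE)
    also have "\<dots> \<le> C\<^sup>2"
      using bound[OF s] by (intro power_mono) (auto simp: Lp_norm_2_eq)
    finally show ?thesis
      by (simp add: mult_left_mono)
  qed
  have "\<bar>yN_coeff \<alpha> w t k\<bar> \<le> sqrt 2 * k * pi * C\<^sup>2 / (k * pi) powr \<alpha>"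
    unfolding yN_coeff_def eigval_powr_half
    using kpi assms(1,2) cont dx_bound by (intro abs_integral_exp_decay_le) auto
  also have "\<dots> = sqrt 2 * C\<^sup>2 * (k * pi) powr (1 - \<alpha>)"
    using kpi by (simp add: powr_diff)
  also have "\<dots> = sqrt 2 * C\<^sup>2 * pi powr (1 - \<alpha>) * k powr (1 - \<alpha>)"
    by (simp add: powr_mult)
  finally show ?thesis .
qed

theorem mainTheorem17:
  fixes T \<alpha> :: real and v :: "nat \<Rightarrow> real \<Rightarrow> real \<Rightarrow> real"
  assumes "T > 0"
    and "7/4 < \<alpha>" and "\<alpha> < 2"
    and L2: "\<And>N t. N \<ge> 1 \<Longrightarrow> t \<in> {0..T} \<Longrightarrow> in_L2 (v N t)"
    and cont: "\<And>N t0. N \<ge> 1 \<Longrightarrow> t0 \<in> {0..T} \<Longrightarrow>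
       ((\<lambda>t. Lp_norm 2 (\<lambda>x. v N t x - v N t0 x)) \<longlongrightarrow> 0) (at t0 within {0..T})"
    and bdd: "\<exists>C. \<forall>N\<ge>1. \<forall>t\<in>{0..T}. Lp_norm 2 (v N t) \<le> C"
  shows "\<exists>C. \<forall>N\<ge>1. \<forall>t\<in>{0..T}. Lp_norm 4 (yN \<alpha> N (v N) t) \<le> C"
proof -
  obtain C where C: "\<And>N t. N \<ge> 1 \<Longrightarrow> t \<in> {0..T} \<Longrightarrow> Lp_norm 2 (v N t) \<le> max C 1"
    using bdd by (meson max.coboundedI1)
  define B where "B = sqrt 2 * (max C 1)\<^sup>2 * pi powr (1 - \<alpha>)"
  define K where "K = 2 * (B / (1 - 2 powr (3/4 - (\<alpha> - 1)))) ^ 4"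
  show ?thesis
  proof (intro exI[of _ "K powr (1/4)"] allI impI ballI)
    fix N :: nat and t assume N: "N \<ge> 1" and t: "t \<in> {0..T}"
    have cont_dx: "continuous_on {0..t} (\<lambda>s. dx_coeff (\<lambda>z. (v N s z)\<^sup>2) k)" for k
      using continuous_on_dx_coeff_square[of "{0..T}" "v N" k] L2[OF N] cont[OF N] t
      by (auto elim!: continuous_on_subset)
    have "\<bar>yN_coeff \<alpha> (v N) t k\<bar> \<le> B * k powr - (\<alpha> - 1)" if "k \<in> {1..N}" for k
      using abs_yN_coeff_le[of k t "v N" "max C 1" \<alpha>] that t cont_dx L2[OF N] C[OF N]
      by (auto simp: B_def)
    then have "integral {0..1} (\<lambda>x. (\<Sum>k\<in>{1..N}. yN_coeff \<alpha> (v N) t k * efun k x) ^ 4) \<le> K"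
      unfolding K_def using assms(2) by (intro integral_sum_efun_power4_le_decay) (auto simp: B_def)
    then show "Lp_norm 4 (yN \<alpha> N (v N) t) \<le> K powr (1/4)"
      using t cont_dx
      by (auto simp: yN_eq_sum_yN_coeff Lp_norm_4_continuous continuous_intros
          intro!: powr_mono2 integral_nonneg integrable_continuous_real)
  qed
qed

end
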